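(* Let $n>2$, $1<k<n$, $G=H_B(n,k)$. For $h\ge 1$ let $d^{(h)}$ be the number of unordered pairs $\{u,v\}$ of vertices of $G$ with $d(u,v)=h$; let $d^{(2)}_{V_1}$ be the number of unordered pairs of vertices of $V_1$ at distance $2$, and $d^{(2)}_{V_2}$, $d^{(4)}_{V_2}$ the numbers of unordered pairs of vertices of $V_2$ at distance $2$ and $4$ respectively. Then (1) $d^{(1)}=\binom{n}{k}\left(\frac{3^k-3}{2}+2^{k-1}(3^{n-k}-1)\right)$; (2) $d^{(3)}=\binom{n}{k}\left(\frac{3^n-1}{2}-\binom{n}{k}-\frac{3^k-3}{2}-2^{k-1}(3^{n-k}-1)\right)$; (3) $d^{(2)}_{V_1}=\binom{\binom{n}{k}}{2}$; (4) $d^{(2)}_{V_2}+d^{(4)}_{V_2}=\binom{\frac{3^n-1}{2}-\binom{n}{k}}{2}$.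
   Context: Fix integers $n\ge 2$ and $1\le k<n$ and positive real numbers $x_1<x_2<\dots<x_n$. Let $\mathscr{B}_n=\{\pm x_1,\pm x_2,\dots,\pm x_{n-1},x_n\}$ (so $-x_n\notin\mathscr{B}_n$). Let $\phi(\mathscr{B}_n)$ be the family of all nonempty subsets $S\subseteq\mathscr{B}_n$ whose elements have pairwise distinct absolute values and whose element of largest absolute value is positive. Let $\mathscr{B}_n^+=\{x_1,\dots,x_n\}$, let $V_1$ be the set of all $k$-element subsets of $\mathscr{B}_n^+$, and let $V_2=\phi(\mathscr{B}_n)\setminus V_1$. For $A\in\phi(\mathscr{B}_n)$ put $A^\dagger=\{|a|:a\in A\}$. The bipartite Kneser B type-$k$ graph $H_B(n,k)$ is the simple graph with vertex set $V_1\cup V_2$ in which $X\in V_1$ and $Y\in V_2$ are adjacent if and only if $X\subseteq Y^\dagger$ or $Y^\dagger\subseteq X$, and there are no other edges. $d(u,v)$ denotes graph distance. *)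

theory Defs
  imports Main Complex_Main
begin

definition Bn :: "nat \<Rightarrow> (nat \<Rightarrow> real) \<Rightarrow> real set" where
  "Bn n x = {x i | i. 1 \<le> i \<and> i \<le> n} \<union> {- x i | i. 1 \<le> i \<and> i \<le> n - 1}"

definition Bn_plus :: "nat \<Rightarrow> (nat \<Rightarrow> real) \<Rightarrow> real set" where
  "Bn_plus n x = {x i | i. 1 \<le> i \<and> i \<le> n}"

definition phiB :: "nat \<Rightarrow> (nat \<Rightarrow> real) \<Rightarrow> real set set" where
  "phiB n x = {S. S \<noteq> {} \<and> S \<subseteq> Bn n x \<and> inj_on abs S \<and>
      (\<exists>a\<in>S. 0 < a \<and> (\<forall>b\<in>S. \<bar>b\<bar> \<le> \<bar>a\<bar>))}"

definition V1 :: "nat \<Rightarrow> nat \<Rightarrow> (nat \<Rightarrow> real) \<Rightarrow> real set set" where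
  "V1 n k x = {S. S \<subseteq> Bn_plus n x \<and> card S = k}"

definition V2 :: "nat \<Rightarrow> nat \<Rightarrow> (nat \<Rightarrow> real) \<Rightarrow> real set set" where
  "V2 n k x = phiB n x - V1 n k x"

definition HB_verts :: "nat \<Rightarrow> nat \<Rightarrow> (nat \<Rightarrow> real) \<Rightarrow> real set set" where
  "HB_verts n k x = V1 n k x \<union> V2 n k x"

definition HB_adj :: "nat \<Rightarrow> nat \<Rightarrow> (nat \<Rightarrow> real) \<Rightarrow> real set \<Rightarrow> real set \<Rightarrow> bool" where
  "HB_adj n k x u v \<longleftrightarrow>
     (u \<in> V1 n k x \<and> v \<in> V2 n k x \<and> (u \<subseteq> abs ` v \<or> abs ` v \<subseteq> u)) \<or>
     (v \<in> V1 n k x \<and> u \<in> V2 n k x \<and> (v \<subseteq> abs ` u \<or> abs ` u \<subseteq> v))"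

definition HB_edges :: "nat \<Rightarrow> nat \<Rightarrow> (nat \<Rightarrow> real) \<Rightarrow> (real set \<times> real set) set" where
  "HB_edges n k x = {(u, v). HB_adj n k x u v}"

definition HB_dist_eq :: "nat \<Rightarrow> nat \<Rightarrow> (nat \<Rightarrow> real) \<Rightarrow> real set \<Rightarrow> real set \<Rightarrow> nat \<Rightarrow> bool" where
  "HB_dist_eq n k x u v h \<longleftrightarrow>
     (u, v) \<in> (HB_edges n k x) ^^ h \<and> (\<forall>m<h. (u, v) \<notin> (HB_edges n k x) ^^ m)"

definition pairs_at_dist :: "nat \<Rightarrow> nat \<Rightarrow> (nat \<Rightarrow> real) \<Rightarrow> real set set \<Rightarrow> nat \<Rightarrow> nat" where
  "pairs_at_dist n k x W h =
     card {{u, v} | u v. u \<in> W \<and> v \<in> W \<and> u \<noteq> v \<and> HB_dist_eq n k x u v h}"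

end

theory Submission
  imports Defs "HOL-Library.FuncSet"
begin

text \<open>
  A vertex of \<open>H\<^sub>B(n,k)\<close> is a subset of \<open>\<plusminus>x\<^sub>1, \<dots>, \<plusminus>x\<^sub>n\<close> with distinct absolute values, i.e. a
  sign vector in \<open>{0,+,-}\<^sup>n\<close>, whose entry of largest absolute value is positive. Flipping the sign
  of that entry pairs the nonempty signed sets with positive maximum with the others, so there are
  \<open>(3\<^sup>n - 1)/2\<close> vertices. The graph is bipartite, the full set \<open>{x\<^sub>1, \<dots>, x\<^sub>n}\<close> is adjacent to every
  \<open>k\<close>-set and every vertex of \<open>V\<^sub>2\<close> has a neighbour in \<open>V\<^sub>1\<close>; hence distances are \<open>1\<close> or \<open>3\<close>
  between the parts, \<open>2\<close> inside \<open>V\<^sub>1\<close>, and \<open>2\<close> or \<open>4\<close> inside \<open>V\<^sub>2\<close>. A \<open>k\<close>-set \<open>X\<close> is adjacent to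
  the signed sets whose support lies inside \<open>X\<close> (\<open>(3\<^sup>k - 1)/2\<close> of them) or contains \<open>X\<close>
  (\<open>2\<^sup>k 3\<^sup>n\<^sup>-\<^sup>k/2\<close>), minus the \<open>2\<^sup>k\<^sup>-\<^sup>1\<close> with support exactly \<open>X\<close> and \<open>X\<close> itself.
\<close>

section \<open>Signed subsets of a set of positive reals\<close>

definition signed_sets :: "real set \<Rightarrow> real set set" where
  "signed_sets P = {Y. Y \<subseteq> P \<union> uminus ` P \<and> inj_on abs Y}"

definition sign_vector :: "real set \<Rightarrow> real set \<Rightarrow> real \<Rightarrow> nat" where
  "sign_vector P Y = (\<lambda>p\<in>P. if p \<in> Y then 1 else if - p \<in> Y then 2 else 0)"

definition signed_set_of :: "real set \<Rightarrow> (real \<Rightarrow> nat) \<Rightarrow> real set" where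
  "signed_set_of P v = {p\<in>P. v p = 1} \<union> uminus ` {p\<in>P. v p = 2}"

definition max_positive :: "real set \<Rightarrow> bool" where
  "max_positive Y \<longleftrightarrow> (\<exists>a\<in>Y. 0 < a \<and> (\<forall>b\<in>Y. \<bar>b\<bar> \<le> \<bar>a\<bar>))"

definition flip_max :: "real set \<Rightarrow> real set" where
  "flip_max Y = (let m = Max (abs ` Y) in insert (if m \<in> Y then - m else m) (Y - {m, - m}))"

lemma prod_three_valued:
  fixes a b c :: nat
  assumes "finite P" "A \<subseteq> B" "B \<subseteq> P"
  shows "(\<Prod>p\<in>P. if p \<in> A then a else if p \<in> B then b else c)
           = a ^ card A * b ^ (card B - card A) * c ^ (card P - card B)"
proof -
  let ?f = "\<lambda>p. if p \<in> A then a else if p \<in> B then b else c"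
  have fin: "finite B" "finite A"
    using finite_subset[OF assms(3,1)] finite_subset[OF assms(2)] by auto
  have "prod ?f P = prod ?f (P - B) * prod ?f (B - A) * prod ?f A"
    by (simp only: prod.subset_diff[OF assms(3,1), of ?f] prod.subset_diff[OF assms(2) fin(1), of ?f]
        mult.assoc)
  also have "prod ?f (P - B) = (\<Prod>p\<in>P - B. c)"
    by (rule prod.cong) (use assms in auto)
  also have "prod ?f (B - A) = (\<Prod>p\<in>B - A. b)"
    by (rule prod.cong) (use assms in auto)
  also have "prod ?f A = (\<Prod>p\<in>A. a)"
    by (rule prod.cong) auto
  finally show ?thesis
    using assms fin by (simp add: card_Diff_subset mult.commute)
qed

lemma Collect_PiE_restrict:
  assumes "\<And>p. B p \<subseteq> C p"
  shows "{v\<in>PiE P C. \<forall>p\<in>P. v p \<in> B p} = PiE P B"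
proof (intro set_eqI iffI)
  fix v assume v: "v \<in> PiE P B"
  then have "v \<in> PiE P C" using PiE_mono[OF assms] by (rule rev_subsetD)
  moreover have "\<forall>p\<in>P. v p \<in> B p" using v by (simp add: PiE_iff)
  ultimately show "v \<in> {v\<in>PiE P C. \<forall>p\<in>P. v p \<in> B p}" by blast
qed (auto simp: PiE_iff)

lemma abs_image_Diff_plus_minus:
  fixes m :: real
  assumes "0 < m"
  shows "abs ` (Y - {m, - m}) = abs ` Y - {m}"
proof
  show "abs ` (Y - {m, - m}) \<subseteq> abs ` Y - {m}"
    using assms by (auto simp: abs_if)
  show "abs ` Y - {m} \<subseteq> abs ` (Y - {m, - m})"
  proof
    fix q assume "q \<in> abs ` Y - {m}"
    then obtain y where "y \<in> Y" "q = \<bar>y\<bar>" "\<bar>y\<bar> \<noteq> m" by auto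
    then show "q \<in> abs ` (Y - {m, - m})" using assms by (intro image_eqI[where x = y]) auto
  qed
qed

locale positive_ground_set =
  fixes P :: "real set"
  assumes finite_P: "finite P" and P_pos: "\<And>p. p \<in> P \<Longrightarrow> 0 < p"
begin

lemma finite_signed_sets: "finite (signed_sets P)"
  by (rule finite_subset[of _ "Pow (P \<union> uminus ` P)"]) (auto simp: signed_sets_def finite_P)

lemma signed_set_finite: "Y \<in> signed_sets P \<Longrightarrow> finite Y"
  by (rule finite_subset[of _ "P \<union> uminus ` P"]) (auto simp: signed_sets_def finite_P)

lemma abs_signed_set_subset:
  assumes "Y \<in> signed_sets P"
  shows "abs ` Y \<subseteq> P"
proof
  fix q assume "q \<in> abs ` Y"
  then obtain y where y: "y \<in> Y" "q = \<bar>y\<bar>" by blast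
  from y(1) assms consider "y \<in> P" | p where "p \<in> P" "y = - p"
    unfolding signed_sets_def by blast
  then show "q \<in> P"
    by cases (auto simp: y(2) P_pos abs_of_pos)
qed

lemma mem_abs_signed_set_iff:
  assumes "p \<in> P"
  shows "p \<in> abs ` Y \<longleftrightarrow> p \<in> Y \<or> - p \<in> Y"
proof
  assume "p \<in> abs ` Y"
  then obtain y where "y \<in> Y" "p = \<bar>y\<bar>" by auto
  then show "p \<in> Y \<or> - p \<in> Y" by (cases "0 \<le> y") auto
next
  assume "p \<in> Y \<or> - p \<in> Y"
  with P_pos[OF assms] show "p \<in> abs ` Y" by (metis abs_minus_cancel abs_of_pos image_eqI)
qed

lemma signed_set_not_both:
  assumes "Y \<in> signed_sets P" "p \<in> P" "p \<in> Y"
  shows "- p \<notin> Y"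
proof
  assume "- p \<in> Y"
  have "inj_on abs Y" using assms(1) by (simp add: signed_sets_def)
  then have "p = - p" by (rule inj_onD) (use assms(3) \<open>- p \<in> Y\<close> in simp_all)
  with P_pos[OF assms(2)] show False by simp
qed

lemma signed_set_of_in_signed_sets: "signed_set_of P v \<in> signed_sets P"
proof -
  have "a = (if v \<bar>a\<bar> = 1 then \<bar>a\<bar> else - \<bar>a\<bar>)" if "a \<in> signed_set_of P v" for a
    using that by (auto simp: signed_set_of_def dest: P_pos)
  then have "inj_on abs (signed_set_of P v)"
    by (intro inj_onI) (metis (no_types))
  then show ?thesis
    by (auto simp: signed_sets_def signed_set_of_def)
qed

lemma signed_set_of_sign_vector:
  assumes Y: "Y \<in> signed_sets P"
  shows "signed_set_of P (sign_vector P Y) = Y"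
proof
  show "signed_set_of P (sign_vector P Y) \<subseteq> Y"
    by (auto simp: signed_set_of_def sign_vector_def split: if_splits)
  show "Y \<subseteq> signed_set_of P (sign_vector P Y)"
  proof
    fix y assume y: "y \<in> Y"
    then consider "y \<in> P" | q where "q \<in> P" "y = - q"
      using Y unfolding signed_sets_def by auto
    then show "y \<in> signed_set_of P (sign_vector P Y)"
    proof cases
      case (2 q)
      then have "q \<notin> Y" using signed_set_not_both[OF Y] y by auto
      with 2 y show ?thesis
        by (auto simp: signed_set_of_def sign_vector_def intro!: image_eqI[where x = q])
    qed (use y in \<open>auto simp: signed_set_of_def sign_vector_def\<close>)
  qed
qed

lemma sign_vector_signed_set_of:
  assumes v: "v \<in> P \<rightarrow>\<^sub>E {0, 1, 2}"
  shows "sign_vector P (signed_set_of P v) = v"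
proof
  fix p
  show "sign_vector P (signed_set_of P v) p = v p"
  proof (cases "p \<in> P")
    case True
    have "- p \<notin> P" using P_pos[OF True] P_pos[of "- p"] by linarith
    then have "p \<in> signed_set_of P v \<longleftrightarrow> v p = 1" "- p \<in> signed_set_of P v \<longleftrightarrow> v p = 2"
      using True by (auto simp: signed_set_of_def)
    with True v show ?thesis by (auto simp: sign_vector_def PiE_iff)
  qed (use v in \<open>auto simp: sign_vector_def PiE_iff extensional_def\<close>)
qed

lemma bij_betw_sign_vector:
  "bij_betw (sign_vector P) (signed_sets P) (P \<rightarrow>\<^sub>E {0, 1, 2})"
proof (rule bij_betwI[where g = "signed_set_of P"])
  show "sign_vector P \<in> signed_sets P \<rightarrow> P \<rightarrow>\<^sub>E {0, 1, 2}"
    by (auto simp: sign_vector_def)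
  show "signed_set_of P \<in> (P \<rightarrow>\<^sub>E {0, 1, 2}) \<rightarrow> signed_sets P"
    using signed_set_of_in_signed_sets by blast
qed (simp_all add: signed_set_of_sign_vector sign_vector_signed_set_of)

text \<open>Elements of \<open>Must\<close> get two signs each, elements of \<open>May - Must\<close> three choices.\<close>
lemma card_signed_sets_between:
  assumes "Must \<subseteq> May" "May \<subseteq> P"
  shows "card {Y\<in>signed_sets P. Must \<subseteq> abs ` Y \<and> abs ` Y \<subseteq> May}
           = 2 ^ card Must * 3 ^ (card May - card Must)"
proof -
  define B where "B p = (if p \<in> Must then {1, 2} else if p \<in> May then {0, 1, 2} else {0::nat})" for p
  have "B p \<subseteq> {0, 1, 2}" for p
    by (auto simp: B_def)
  then have PiE_B: "{v\<in>P \<rightarrow>\<^sub>E {0, 1, 2}. \<forall>p\<in>P. v p \<in> B p} = PiE P B"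
    by (rule Collect_PiE_restrict)
  have "bij_betw (sign_vector P) {Y\<in>signed_sets P. Must \<subseteq> abs ` Y \<and> abs ` Y \<subseteq> May}
          {v\<in>P \<rightarrow>\<^sub>E {0, 1, 2}. \<forall>p\<in>P. v p \<in> B p}"
  proof (rule bij_betw_Collect[OF bij_betw_sign_vector])
    fix Y assume Y: "Y \<in> signed_sets P"
    have pt: "sign_vector P Y p \<in> B p \<longleftrightarrow> (p \<in> Must \<longrightarrow> p \<in> abs ` Y) \<and> (p \<in> abs ` Y \<longrightarrow> p \<in> May)"
      if "p \<in> P" for p
      using mem_abs_signed_set_iff[OF that, of Y] assms that
      unfolding B_def sign_vector_def by auto
    show "(\<forall>p\<in>P. sign_vector P Y p \<in> B p) \<longleftrightarrow> Must \<subseteq> abs ` Y \<and> abs ` Y \<subseteq> May"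
    proof
      assume B: "\<forall>p\<in>P. sign_vector P Y p \<in> B p"
      have "Must \<subseteq> abs ` Y"
        using B pt assms by auto
      moreover have "abs ` Y \<subseteq> May"
        using B pt abs_signed_set_subset[OF Y] by auto
      ultimately show "Must \<subseteq> abs ` Y \<and> abs ` Y \<subseteq> May" ..
    qed (use pt in auto)
  qed
  then have "card {Y\<in>signed_sets P. Must \<subseteq> abs ` Y \<and> abs ` Y \<subseteq> May} = card (PiE P B)"
    unfolding PiE_B by (rule bij_betw_same_card)
  also have "\<dots> = (\<Prod>p\<in>P. card (B p))"
    by (rule card_PiE[OF finite_P])
  also have "\<dots> = (\<Prod>p\<in>P. if p \<in> Must then 2 else if p \<in> May then 3 else 1)"
    by (rule prod.cong) (simp_all add: B_def)
  also have "\<dots> = 2 ^ card Must * 3 ^ (card May - card Must) * 1 ^ (card P - card May)"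
    by (rule prod_three_valued[OF finite_P assms])
  finally show ?thesis by simp
qed

lemma Max_abs_signed_set:
  assumes "Y \<in> signed_sets P" "Y \<noteq> {}"
  shows "Max (abs ` Y) \<in> P" "Max (abs ` Y) \<in> Y \<or> - Max (abs ` Y) \<in> Y"
proof -
  have "Max (abs ` Y) \<in> abs ` Y"
    using signed_set_finite[OF assms(1)] assms(2) by (intro Max_in) auto
  then show "Max (abs ` Y) \<in> P" "Max (abs ` Y) \<in> Y \<or> - Max (abs ` Y) \<in> Y"
    using abs_signed_set_subset[OF assms(1)] mem_abs_signed_set_iff by auto
qed

lemma max_positive_iff_Max_mem:
  assumes "Y \<in> signed_sets P" "Y \<noteq> {}"
  shows "max_positive Y \<longleftrightarrow> Max (abs ` Y) \<in> Y"
proof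
  assume "max_positive Y"
  then obtain a where a: "a \<in> Y" "0 < a" "\<forall>b\<in>Y. \<bar>b\<bar> \<le> \<bar>a\<bar>"
    unfolding max_positive_def by blast
  have "Max (abs ` Y) = \<bar>a\<bar>"
    using a signed_set_finite[OF assms(1)] by (intro Max_eqI) (auto intro: image_eqI[where x = a])
  with a show "Max (abs ` Y) \<in> Y" by simp
next
  assume m: "Max (abs ` Y) \<in> Y"
  have "\<forall>b\<in>Y. \<bar>b\<bar> \<le> Max (abs ` Y)"
    using signed_set_finite[OF assms(1)] by simp
  with m P_pos[OF Max_abs_signed_set(1)[OF assms]] show "max_positive Y"
    unfolding max_positive_def by (metis abs_of_pos)
qed

lemma flip_max_props:
  assumes Y: "Y \<in> signed_sets P" "Y \<noteq> {}"
  shows "flip_max Y \<in> signed_sets P" "flip_max Y \<noteq> {}" "abs ` flip_max Y = abs ` Y"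
    "max_positive (flip_max Y) \<longleftrightarrow> \<not> max_positive Y" "flip_max (flip_max Y) = Y"
proof -
  define m where "m = Max (abs ` Y)"
  have mP: "m \<in> P" and mY: "m \<in> Y \<or> - m \<in> Y"
    using Max_abs_signed_set[OF Y] unfolding m_def by auto
  have m_pos: "0 < m" using P_pos[OF mP] .
  have not_both: "m \<in> Y \<Longrightarrow> - m \<notin> Y" using signed_set_not_both[OF Y(1) mP] .
  have inj: "inj_on abs Y" and sub: "Y \<subseteq> P \<union> uminus ` P"
    using Y(1) unfolding signed_sets_def by auto
  have flip: "flip_max Y = insert (if m \<in> Y then - m else m) (Y - {m, - m})"
    unfolding flip_max_def m_def Let_def ..
  have abs_rest: "abs ` (Y - {m, - m}) = abs ` Y - {m}"
    using m_pos by (rule abs_image_Diff_plus_minus)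
  have m_abs: "m \<in> abs ` Y" using mem_abs_signed_set_iff[OF mP] mY by blast
  show abs_flip: "abs ` flip_max Y = abs ` Y"
    unfolding flip using abs_rest m_abs m_pos by auto
  show "flip_max Y \<noteq> {}" unfolding flip by simp
  have "inj_on abs (insert (if m \<in> Y then - m else m) (Y - {m, - m}))"
    unfolding inj_on_insert using inj_on_diff[OF inj] abs_rest m_pos by auto
  then show flip_signed: "flip_max Y \<in> signed_sets P"
    using sub mP unfolding flip signed_sets_def by auto
  have m_flip: "m \<in> flip_max Y \<longleftrightarrow> m \<notin> Y"
    unfolding flip using m_pos by auto
  have Max_flip: "Max (abs ` flip_max Y) = m" unfolding abs_flip m_def ..
  show "max_positive (flip_max Y) \<longleftrightarrow> \<not> max_positive Y"
    using max_positive_iff_Max_mem[OF Y] max_positive_iff_Max_mem[OF flip_signed \<open>flip_max Y \<noteq> {}\<close>]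
      Max_flip m_flip m_def by simp
  have "flip_max (flip_max Y) = insert (if m \<in> flip_max Y then - m else m) (flip_max Y - {m, - m})"
    by (simp only: flip_max_def[of "flip_max Y"] Let_def Max_flip)
  then show "flip_max (flip_max Y) = Y"
    using mY not_both m_flip unfolding flip by auto
qed

text \<open>Flipping is an involution exchanging the signed sets with positive and with negative maximum.\<close>
lemma card_max_positive_half:
  "2 * card {Y\<in>signed_sets P. Y \<noteq> {} \<and> Q (abs ` Y) \<and> max_positive Y}
     = card {Y\<in>signed_sets P. Y \<noteq> {} \<and> Q (abs ` Y)}"
proof -
  let ?pos = "{Y\<in>signed_sets P. Y \<noteq> {} \<and> Q (abs ` Y) \<and> max_positive Y}"
  let ?neg = "{Y\<in>signed_sets P. Y \<noteq> {} \<and> Q (abs ` Y) \<and> \<not> max_positive Y}"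
  have "bij_betw flip_max ?pos ?neg"
    by (rule bij_betwI[where g = flip_max]) (auto simp: flip_max_props)
  then have "card ?pos = card ?neg" by (rule bij_betw_same_card)
  moreover have "card (?pos \<union> ?neg) = card ?pos + card ?neg"
    by (rule card_Un_disjoint) (auto intro: finite_subset[OF _ finite_signed_sets])
  moreover have "?pos \<union> ?neg = {Y\<in>signed_sets P. Y \<noteq> {} \<and> Q (abs ` Y)}" by auto
  ultimately show ?thesis by simp
qed

lemma card_max_positive_between:
  assumes "Must \<subseteq> May" "May \<subseteq> P"
  shows "2 * card {Y\<in>signed_sets P. max_positive Y \<and> Must \<subseteq> abs ` Y \<and> abs ` Y \<subseteq> May}
           + (if Must = {} then 1 else 0) = 2 ^ card Must * 3 ^ (card May - card Must)"
proof -
  let ?all = "{Y\<in>signed_sets P. Must \<subseteq> abs ` Y \<and> abs ` Y \<subseteq> May}"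
  let ?ne = "{Y\<in>signed_sets P. Y \<noteq> {} \<and> Must \<subseteq> abs ` Y \<and> abs ` Y \<subseteq> May}"
  have "{Y\<in>signed_sets P. max_positive Y \<and> Must \<subseteq> abs ` Y \<and> abs ` Y \<subseteq> May}
          = {Y\<in>signed_sets P. Y \<noteq> {} \<and> (Must \<subseteq> abs ` Y \<and> abs ` Y \<subseteq> May) \<and> max_positive Y}"
    by (auto simp: max_positive_def)
  then have "2 * card {Y\<in>signed_sets P. max_positive Y \<and> Must \<subseteq> abs ` Y \<and> abs ` Y \<subseteq> May}
               = card ?ne"
    using card_max_positive_half[of "\<lambda>S. Must \<subseteq> S \<and> S \<subseteq> May"] by simp
  moreover have "card ?all = card ?ne + (if Must = {} then 1 else 0)"
  proof (cases "Must = {}")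
    case True
    then have "?all = insert {} ?ne" "{} \<notin> ?ne" "{} \<in> signed_sets P"
      by (auto simp: signed_sets_def)
    then show ?thesis
      using True finite_subset[OF _ finite_signed_sets, of ?ne] by simp
  qed (auto intro: arg_cong[where f = card])
  ultimately show ?thesis
    using card_signed_sets_between[OF assms] by simp
qed

end

section \<open>Counting unordered pairs\<close>

lemma card_doubletons:
  assumes "finite W"
  shows "card {{u, v} | u v. u \<in> W \<and> v \<in> W \<and> u \<noteq> v} = card W choose 2"
proof -
  have "{{u, v} | u v. u \<in> W \<and> v \<in> W \<and> u \<noteq> v} = {D. D \<subseteq> W \<and> card D = 2}"
    by (auto simp: card_2_iff)
  then show ?thesis using n_subsets[OF assms] by simp
qed

lemma card_doubletons_all:
  assumes "finite W" "\<And>u v. u \<in> W \<Longrightarrow> v \<in> W \<Longrightarrow> u \<noteq> v \<Longrightarrow> R u v"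
  shows "card {{u, v} | u v. u \<in> W \<and> v \<in> W \<and> u \<noteq> v \<and> R u v} = card W choose 2"
proof -
  have "{{u, v} | u v. u \<in> W \<and> v \<in> W \<and> u \<noteq> v \<and> R u v} = {{u, v} | u v. u \<in> W \<and> v \<in> W \<and> u \<noteq> v}"
    using assms(2) by blast
  then show ?thesis using card_doubletons[OF assms(1)] by simp
qed

lemma card_doubletons_split:
  assumes "finite W" "symp S" "\<And>u v. R u v \<Longrightarrow> \<not> S u v"
    and "\<And>u v. u \<in> W \<Longrightarrow> v \<in> W \<Longrightarrow> u \<noteq> v \<Longrightarrow> R u v \<or> S u v"
  shows "card {{u, v} | u v. u \<in> W \<and> v \<in> W \<and> u \<noteq> v \<and> R u v}
           + card {{u, v} | u v. u \<in> W \<and> v \<in> W \<and> u \<noteq> v \<and> S u v} = card W choose 2"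
proof -
  let ?D = "\<lambda>T. {{u, v} | u v. u \<in> W \<and> v \<in> W \<and> u \<noteq> v \<and> T u v}"
  have fin: "finite (?D T)" for T
    by (rule finite_subset[of _ "Pow W"]) (auto simp: assms(1))
  have "?D R \<inter> ?D S = {}"
  proof (rule equals0I)
    fix D assume "D \<in> ?D R \<inter> ?D S"
    then obtain a b c d where "D = {a, b}" "R a b" "D = {c, d}" "S c d" by blast
    then have "S a b" using assms(2) by (auto simp: doubleton_eq_iff dest: sympD)
    with assms(3) \<open>R a b\<close> show False by blast
  qed
  then have "card (?D R) + card (?D S) = card (?D R \<union> ?D S)"
    using card_Un_disjoint[OF fin fin] by simp
  also have "?D R \<union> ?D S = {{u, v} | u v. u \<in> W \<and> v \<in> W \<and> u \<noteq> v}"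
    using assms(4) by blast
  finally show ?thesis using card_doubletons[OF assms(1)] by simp
qed

lemma card_doubletons_across:
  assumes "finite A" "finite B" "A \<inter> B = {}" "symp R"
    and across: "\<And>u v. u \<in> A \<union> B \<Longrightarrow> v \<in> A \<union> B \<Longrightarrow> R u v \<Longrightarrow> u \<in> A \<longleftrightarrow> v \<in> B"
  shows "card {{u, v} | u v. u \<in> A \<union> B \<and> v \<in> A \<union> B \<and> u \<noteq> v \<and> R u v}
           = (\<Sum>a\<in>A. card {b\<in>B. R a b})"
proof -
  let ?G = "SIGMA a:A. {b\<in>B. R a b}"
  have "{{u, v} | u v. u \<in> A \<union> B \<and> v \<in> A \<union> B \<and> u \<noteq> v \<and> R u v} = (\<lambda>(a, b). {a, b}) ` ?G"
  proof (intro equalityI subsetI)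
    fix D assume "D \<in> {{u, v} | u v. u \<in> A \<union> B \<and> v \<in> A \<union> B \<and> u \<noteq> v \<and> R u v}"
    then obtain u v where D: "D = {u, v}" "u \<in> A \<union> B" "v \<in> A \<union> B" "R u v" by blast
    then consider "u \<in> A" "v \<in> B" | "v \<in> A" "u \<in> B"
      using across by blast
    then show "D \<in> (\<lambda>(a, b). {a, b}) ` ?G"
    proof cases
      case 2
      then have "(v, u) \<in> ?G" using D(4) assms(4) by (auto dest: sympD)
      then show ?thesis unfolding D(1) by (auto simp: image_iff insert_commute)
    qed (use D in force)
  next
    fix D assume "D \<in> (\<lambda>(a, b). {a, b}) ` ?G"
    then obtain a b where "a \<in> A" "b \<in> B" "R a b" "D = {a, b}" by blast
    moreover have "a \<noteq> b" using calculation assms(3) by blast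
    ultimately show "D \<in> {{u, v} | u v. u \<in> A \<union> B \<and> v \<in> A \<union> B \<and> u \<noteq> v \<and> R u v}"
      by blast
  qed
  moreover have "inj_on (\<lambda>(a, b). {a, b}) ?G"
    using assms(3) by (auto simp: inj_on_def doubleton_eq_iff)
  ultimately have "card {{u, v} | u v. u \<in> A \<union> B \<and> v \<in> A \<union> B \<and> u \<noteq> v \<and> R u v} = card ?G"
    by (simp add: card_image)
  also have "\<dots> = (\<Sum>a\<in>A. card {b\<in>B. R a b})"
    by (rule card_SigmaI[OF assms(1)]) (use assms(2) in auto)
  finally show ?thesis .
qed

section \<open>Distances in bipartite graphs\<close>

definition rel_dist :: "('a \<times> 'a) set \<Rightarrow> 'a \<Rightarrow> 'a \<Rightarrow> nat \<Rightarrow> bool" where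
  "rel_dist E u v h \<longleftrightarrow> (u, v) \<in> E ^^ h \<and> (\<forall>m<h. (u, v) \<notin> E ^^ m)"

lemma rel_dist_unique:
  assumes "rel_dist E u v h" "rel_dist E u v h'"
  shows "h = h'"
proof (rule ccontr)
  assume "h \<noteq> h'"
  then consider "h < h'" | "h' < h" by arith
  then show False
    using assms unfolding rel_dist_def by cases auto
qed

lemma relpow_sym: "sym E \<Longrightarrow> (u, v) \<in> E ^^ m \<Longrightarrow> (v, u) \<in> E ^^ m"
proof (induction m arbitrary: v)
  case (Suc m)
  from Suc.prems(2) obtain w where w: "(u, w) \<in> E ^^ m" "(w, v) \<in> E"
    by (rule relpow_Suc_E)
  show ?case
    by (rule relpow_Suc_I2[OF symD[OF Suc.prems(1) w(2)] Suc.IH[OF Suc.prems(1) w(1)]])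
qed simp

lemma rel_dist_sym:
  assumes "sym E" "rel_dist E u v h"
  shows "rel_dist E v u h"
  using assms(2) relpow_sym[OF assms(1), of u v] relpow_sym[OF assms(1), of v u]
  unfolding rel_dist_def by auto

lemma relpow_2_I: "(a, c) \<in> E \<Longrightarrow> (c, b) \<in> E \<Longrightarrow> (a, b) \<in> E ^^ 2"
  by (auto simp: numeral_2_eq_2)

locale bipartite_graph =
  fixes E :: "('a \<times> 'a) set" and A B :: "'a set"
  assumes sym_E: "sym E"
    and edge_between: "(u, v) \<in> E \<Longrightarrow> (u \<in> A \<and> v \<in> B) \<or> (u \<in> B \<and> v \<in> A)"
    and disjoint_parts: "A \<inter> B = {}"
begin

lemma relpow_parity:
  "(u, v) \<in> E ^^ m \<Longrightarrow> u \<in> A \<union> B \<Longrightarrow> v \<in> A \<union> B \<and> (v \<in> A \<longleftrightarrow> (u \<in> A \<longleftrightarrow> even m))"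
proof (induction m arbitrary: v)
  case (Suc m)
  from Suc.prems(1) obtain w where w: "(u, w) \<in> E ^^ m" "(w, v) \<in> E"
    by (rule relpow_Suc_E)
  have "w \<in> A \<union> B \<and> (w \<in> A \<longleftrightarrow> (u \<in> A \<longleftrightarrow> even m))"
    using Suc.IH[OF w(1) Suc.prems(2)] .
  moreover have "(w \<in> A \<and> v \<in> B) \<or> (w \<in> B \<and> v \<in> A)"
    using edge_between[OF w(2)] .
  ultimately show ?case using disjoint_parts by auto
qed simp

lemma edge_irrefl: "(u, v) \<in> E \<Longrightarrow> u \<noteq> v"
  using edge_between disjoint_parts by blast

lemma rel_dist_1_iff: "rel_dist E u v 1 \<longleftrightarrow> (u, v) \<in> E"
  unfolding rel_dist_def using edge_irrefl by auto

lemma no_walk_of_other_parity: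
  assumes "u \<in> A \<union> B" "v \<in> A \<union> B" "(u \<in> A \<longleftrightarrow> v \<in> A) \<longleftrightarrow> odd m"
  shows "(u, v) \<notin> E ^^ m"
  using relpow_parity assms by blast

end

locale bipartite_graph_with_hub = bipartite_graph +
  fixes c
  assumes hub_adjacent: "\<And>a. a \<in> A \<Longrightarrow> (a, c) \<in> E"
    and B_has_neighbour: "\<And>b. b \<in> B \<Longrightarrow> \<exists>a\<in>A. (a, b) \<in> E"
begin

lemma relpow_2_within_A: "a \<in> A \<Longrightarrow> a' \<in> A \<Longrightarrow> (a, a') \<in> E ^^ 2"
  by (rule relpow_2_I[OF hub_adjacent symD[OF sym_E hub_adjacent]])

lemma rel_dist_within_A: "a \<in> A \<Longrightarrow> a' \<in> A \<Longrightarrow> a \<noteq> a' \<Longrightarrow> rel_dist E a a' 2"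
  unfolding rel_dist_def using relpow_2_within_A no_walk_of_other_parity[of a a' 1]
  by (auto simp: less_2_cases_iff)

lemma rel_dist_3_iff:
  assumes a: "a \<in> A" and b: "b \<in> B"
  shows "rel_dist E a b 3 \<longleftrightarrow> (a, b) \<notin> E"
proof
  assume "rel_dist E a b 3"
  then have "\<forall>m<3. (a, b) \<notin> E ^^ m" unfolding rel_dist_def by blast
  from this[rule_format, of 1] have "(a, b) \<notin> E ^^ 1" by simp
  then show "(a, b) \<notin> E" by simp
next
  assume nE: "(a, b) \<notin> E"
  obtain a' where a': "a' \<in> A" "(a', b) \<in> E" using B_has_neighbour[OF b] by blast
  have "(a, b) \<in> E ^^ Suc 2"
    using relpow_Suc_I[OF relpow_2_within_A[OF a a'(1)] a'(2)] .
  moreover have "(a, b) \<notin> E ^^ m" if "m < 3" for m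
  proof -
    from that have "m = 0 \<or> m = 1 \<or> m = 2" by auto
    moreover have "b \<notin> A" using b disjoint_parts by auto
    ultimately show ?thesis
      using nE no_walk_of_other_parity[of a b 0] no_walk_of_other_parity[of a b 2] a b by auto
  qed
  ultimately show "rel_dist E a b 3"
    unfolding rel_dist_def by (simp add: numeral_3_eq_3)
qed

lemma rel_dist_within_B:
  assumes b: "b \<in> B" and b': "b' \<in> B" and ne: "b \<noteq> b'"
  shows "rel_dist E b b' 2 \<or> rel_dist E b b' 4"
proof -
  have "b \<notin> A" "b' \<notin> A" using b b' disjoint_parts by auto
  then have odd_or_0: "(b, b') \<notin> E ^^ m" if "m = 0 \<or> m = 1 \<or> m = 3" for m
    using that ne no_walk_of_other_parity[of b b' 1] no_walk_of_other_parity[of b b' 3] b b'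
    by auto
  obtain a where a: "a \<in> A" "(b, a) \<in> E" using B_has_neighbour[OF b] sym_E by (blast dest: symD)
  obtain a' where a': "a' \<in> A" "(a', b') \<in> E" using B_has_neighbour[OF b'] by blast
  have "(b, b') \<in> E ^^ Suc (Suc 2)"
    by (rule relpow_Suc_I[OF relpow_Suc_I2[OF a(2) relpow_2_within_A[OF a(1) a'(1)]] a'(2)])
  then have walk4: "(b, b') \<in> E ^^ 4" by (simp add: numeral_eq_Suc)
  show ?thesis
  proof (cases "(b, b') \<in> E ^^ 2")
    case True
    have "(b, b') \<notin> E ^^ m" if "m < 2" for m
      using that odd_or_0 by (auto simp: less_2_cases_iff)
    with True have "rel_dist E b b' 2"
      unfolding rel_dist_def by blast
    then show ?thesis ..
  next
    case False
    have "(b, b') \<notin> E ^^ m" if "m < 4" for m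
    proof -
      have "m = 0 \<or> m = 1 \<or> m = 2 \<or> m = 3" using that by auto
      then show ?thesis using odd_or_0 False by auto
    qed
    then have "rel_dist E b b' 4"
      unfolding rel_dist_def using walk4 by blast
    then show ?thesis ..
  qed
qed

end

section \<open>The graph \<open>H\<^sub>B(n,k)\<close>\<close>

lemma HB_dist_eq_eq_rel_dist: "HB_dist_eq n k x = rel_dist (HB_edges n k x)"
  by (intro ext) (simp add: HB_dist_eq_def rel_dist_def)

locale HB_parameters =
  fixes n k :: nat and x :: "nat \<Rightarrow> real"
  assumes n_gt_2: "n > 2" and k_gt_1: "1 < k" and k_lt_n: "k < n"
    and x_pos: "\<forall>i. 1 \<le> i \<and> i \<le> n \<longrightarrow> 0 < x i"
    and x_strict_mono: "\<forall>i j. 1 \<le> i \<and> i < j \<and> j \<le> n \<longrightarrow> x i < x j"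
begin

abbreviation "Bplus \<equiv> Bn_plus n x"
abbreviation "E \<equiv> HB_edges n k x"

lemma Bplus_eq: "Bplus = x ` {1..n}"
  unfolding Bn_plus_def by auto

lemma inj_on_x: "inj_on x {1..n}"
proof (rule strict_mono_on_imp_inj_on)
  show "strict_mono_on {1..n} x"
    using x_strict_mono by (intro strict_mono_onI) simp
qed

lemma card_Bplus: "card Bplus = n"
  using Bplus_eq inj_on_x by (simp add: card_image)

lemma x_n_pos: "0 < x n"
  using x_pos n_gt_2 by simp

lemma Bplus_le_x_n: "p \<in> Bplus \<Longrightarrow> p \<le> x n"
proof -
  assume "p \<in> Bplus"
  then obtain i where "1 \<le> i" "i \<le> n" "p = x i" unfolding Bplus_eq by auto
  then show "p \<le> x n" using x_strict_mono by (cases "i = n") (auto simp: less_imp_le)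
qed

sublocale positive_ground_set Bplus
  by unfold_locales (auto simp: Bplus_eq x_pos)

lemma Bn_subset: "Bn n x \<subseteq> Bplus \<union> uminus ` Bplus"
proof
  fix y assume "y \<in> Bn n x"
  then consider "y \<in> Bplus" | i where "1 \<le> i" "i \<le> n - 1" "y = - x i"
    unfolding Bn_def Bn_plus_def by blast
  then show "y \<in> Bplus \<union> uminus ` Bplus"
  proof cases
    case (2 i)
    then have "x i \<in> Bplus" unfolding Bplus_eq by auto
    with 2 show ?thesis by auto
  qed simp
qed

lemma mem_BnI:
  assumes "y \<in> Bplus \<union> uminus ` Bplus" "y \<noteq> - x n"
  shows "y \<in> Bn n x"
proof (cases "y \<in> Bplus")
  case False
  with assms(1) obtain i where i: "1 \<le> i" "i \<le> n" "y = - x i"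
    unfolding Bn_plus_def by auto
  with assms(2) have "i \<le> n - 1" by (cases "i = n") auto
  with i show ?thesis unfolding Bn_def by auto
qed (auto simp: Bn_def Bn_plus_def)

text \<open>\<open>-x\<^sub>n\<close> is missing from \<open>B\<^sub>n\<close>, but no signed set with positive maximum contains it.\<close>
lemma phiB_eq: "phiB n x = {Y\<in>signed_sets Bplus. max_positive Y}"
proof (intro set_eqI iffI)
  fix Y assume "Y \<in> phiB n x"
  then have "Y \<subseteq> Bn n x" "inj_on abs Y" "max_positive Y"
    unfolding phiB_def max_positive_def by auto
  then show "Y \<in> {Y\<in>signed_sets Bplus. max_positive Y}"
    using Bn_subset unfolding signed_sets_def by auto
next
  fix Y assume "Y \<in> {Y\<in>signed_sets Bplus. max_positive Y}"
  then have sub: "Y \<subseteq> Bplus \<union> uminus ` Bplus" and inj: "inj_on abs Y" and "max_positive Y"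
    unfolding signed_sets_def by auto
  then obtain a where a: "a \<in> Y" "0 < a" "\<forall>b\<in>Y. \<bar>b\<bar> \<le> \<bar>a\<bar>"
    unfolding max_positive_def by blast
  have "a \<notin> uminus ` Bplus" using a(2) P_pos by force
  then have "a \<in> Bplus" using sub a(1) by blast
  have "- x n \<notin> Y"
  proof
    assume "- x n \<in> Y"
    then have "\<bar>a\<bar> = \<bar>- x n\<bar>"
      using a(2,3) Bplus_le_x_n[OF \<open>a \<in> Bplus\<close>] x_n_pos by force
    then have "a = - x n" by (rule inj_onD[OF inj _ a(1) \<open>- x n \<in> Y\<close>])
    with a(2) x_n_pos show False by simp
  qed
  have "Y \<subseteq> Bn n x"
  proof
    fix y assume "y \<in> Y"
    with sub \<open>- x n \<notin> Y\<close> show "y \<in> Bn n x" by (intro mem_BnI) auto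
  qed
  with inj a show "Y \<in> phiB n x"
    unfolding phiB_def by auto
qed

lemma subset_Bplus_in_phiB:
  assumes "S \<subseteq> Bplus" "S \<noteq> {}"
  shows "S \<in> phiB n x"
proof -
  have fin: "finite S" using assms(1) finite_P by (rule finite_subset)
  have pos: "0 < s" if "s \<in> S" for s using assms(1) that P_pos by blast
  have "inj_on abs S" by (intro inj_onI) (simp add: pos abs_of_pos)
  moreover have "max_positive S"
  proof -
    have "Max S \<in> S" using fin assms(2) by (rule Max_in)
    moreover have "\<bar>b\<bar> \<le> \<bar>Max S\<bar>" if "b \<in> S" for b
      using that calculation pos fin by (simp add: abs_of_pos)
    ultimately show ?thesis unfolding max_positive_def using pos by blast
  qed
  ultimately show ?thesis
    using assms(1) unfolding phiB_eq signed_sets_def by auto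
qed

lemma V1_subset_phiB: "V1 n k x \<subseteq> phiB n x"
proof
  fix S assume "S \<in> V1 n k x"
  then have "S \<subseteq> Bplus" "card S = k" unfolding V1_def by auto
  moreover from this(2) have "S \<noteq> {}" using k_gt_1 by auto
  ultimately show "S \<in> phiB n x" by (blast intro: subset_Bplus_in_phiB)
qed

lemma card_V1: "card (V1 n k x) = n choose k"
  using n_subsets[OF finite_P, of k] card_Bplus unfolding V1_def by simp

lemma card_phiB: "2 * card (phiB n x) + 1 = 3 ^ n"
proof -
  have "{Y\<in>signed_sets Bplus. max_positive Y \<and> {} \<subseteq> abs ` Y \<and> abs ` Y \<subseteq> Bplus}
          = {Y\<in>signed_sets Bplus. max_positive Y}"
    using abs_signed_set_subset by auto
  then show ?thesis
    using card_max_positive_between[of "{}" Bplus] card_Bplus unfolding phiB_eq by simp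
qed

lemma card_V2: "card (V2 n k x) + (n choose k) = (3 ^ n - 1) div 2"
proof -
  have fin: "finite (phiB n x)" unfolding phiB_eq using finite_signed_sets by simp
  have "card (V2 n k x) = card (phiB n x) - card (V1 n k x)"
    unfolding V2_def by (intro card_Diff_subset finite_subset[OF V1_subset_phiB fin] V1_subset_phiB)
  moreover have "card (V1 n k x) \<le> card (phiB n x)" by (rule card_mono[OF fin V1_subset_phiB])
  moreover have "3 ^ n - 1 = 2 * card (phiB n x)" using card_phiB by simp
  ultimately show ?thesis using card_V1 by simp
qed

lemma int_card_V2: "int (card (V2 n k x)) = (3 ^ n - 1) div 2 - int (n choose k)"
proof -
  have "int ((3 ^ n - 1) div 2) = ((3::int) ^ n - 1) div 2"
    by (simp add: zdiv_int)
  with card_V2 show ?thesis by linarith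
qed

lemma Bplus_in_V2: "Bplus \<in> V2 n k x"
proof -
  have "Bplus \<noteq> {}" using card_Bplus n_gt_2 by auto
  then show ?thesis
    using subset_Bplus_in_phiB[of Bplus] card_Bplus k_lt_n unfolding V2_def V1_def by auto
qed

lemma edge_from_V1_iff:
  assumes "X \<in> V1 n k x"
  shows "(X, Y) \<in> E \<longleftrightarrow> Y \<in> V2 n k x \<and> (X \<subseteq> abs ` Y \<or> abs ` Y \<subseteq> X)"
  using assms unfolding HB_edges_def HB_adj_def V2_def by auto

lemma V2_has_neighbour:
  assumes Y: "Y \<in> V2 n k x"
  shows "\<exists>X\<in>V1 n k x. (X, Y) \<in> E"
proof -
  have Y_sub: "abs ` Y \<subseteq> Bplus"
    using Y abs_signed_set_subset unfolding V2_def phiB_eq by auto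
  have fin: "finite (abs ` Y)" using Y_sub finite_P by (rule finite_subset)
  obtain X where X: "X \<subseteq> Bplus" "card X = k" "X \<subseteq> abs ` Y \<or> abs ` Y \<subseteq> X"
  proof (cases "k \<le> card (abs ` Y)")
    case True
    then obtain X where "X \<subseteq> abs ` Y" "card X = k" by (rule obtain_subset_with_card_n)
    with Y_sub show ?thesis by (intro that[of X]) auto
  next
    case False
    have "card (Bplus - abs ` Y) = n - card (abs ` Y)"
      using Y_sub fin card_Bplus by (simp add: card_Diff_subset)
    then have "k - card (abs ` Y) \<le> card (Bplus - abs ` Y)" using k_lt_n by simp
    then obtain T where T: "T \<subseteq> Bplus - abs ` Y" "card T = k - card (abs ` Y)"
      by (rule obtain_subset_with_card_n)
    have "card (abs ` Y \<union> T) = k"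
      using T False fin finite_subset[OF T(1)] finite_P by (subst card_Un_disjoint) auto
    with Y_sub T show ?thesis by (intro that[of "abs ` Y \<union> T"]) auto
  qed
  then have "X \<in> V1 n k x" unfolding V1_def by blast
  with X(3) Y show ?thesis using edge_from_V1_iff by blast
qed

sublocale bipartite_graph_with_hub E "V1 n k x" "V2 n k x" Bplus
proof
  show "sym E" by (auto simp: HB_edges_def HB_adj_def intro: symI)
  show "(u, v) \<in> E \<Longrightarrow> u \<in> V1 n k x \<and> v \<in> V2 n k x \<or> u \<in> V2 n k x \<and> v \<in> V1 n k x" for u v
    by (auto simp: HB_edges_def HB_adj_def)
  show "V1 n k x \<inter> V2 n k x = {}" by (auto simp: V2_def)
  show "(X, Bplus) \<in> E" if "X \<in> V1 n k x" for X
    using that Bplus_in_V2 P_pos unfolding edge_from_V1_iff[OF that] V1_def by force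
qed (rule V2_has_neighbour)

lemma neighbours_of_V1_eq:
  assumes X: "X \<in> V1 n k x"
  shows "{Y\<in>V2 n k x. (X, Y) \<in> E}
           = ({Y\<in>signed_sets Bplus. max_positive Y \<and> {} \<subseteq> abs ` Y \<and> abs ` Y \<subseteq> X}
              \<union> {Y\<in>signed_sets Bplus. max_positive Y \<and> X \<subseteq> abs ` Y \<and> abs ` Y \<subseteq> Bplus}) - {X}"
proof -
  have X_sub: "X \<subseteq> Bplus" and card_X: "card X = k" using X unfolding V1_def by auto
  have "Y \<notin> V1 n k x" if "X \<subseteq> abs ` Y \<or> abs ` Y \<subseteq> X" "Y \<noteq> X" for Y
  proof
    assume "Y \<in> V1 n k x"
    then have "Y \<subseteq> Bplus" "card Y = k" unfolding V1_def by auto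
    moreover from this(1) have "abs ` Y = Y" using P_pos by force
    ultimately show False
      using that card_X X_sub finite_P by (metis card_subset_eq finite_subset)
  qed
  then show ?thesis
    using X edge_from_V1_iff[OF X] abs_signed_set_subset[unfolded image_subset_iff]
    unfolding V2_def phiB_eq by auto
qed

lemma card_neighbours_of_V1:
  assumes X: "X \<in> V1 n k x"
  shows "2 * card {Y\<in>V2 n k x. (X, Y) \<in> E} + 3 + 2 ^ k = 3 ^ k + 2 ^ k * 3 ^ (n - k)"
proof -
  let ?N = "\<lambda>Must May. {Y\<in>signed_sets Bplus. max_positive Y \<and> Must \<subseteq> abs ` Y \<and> abs ` Y \<subseteq> May}"
  have X_sub: "X \<subseteq> Bplus" and card_X: "card X = k" using X unfolding V1_def by auto
  have X_ne: "X \<noteq> {}" using card_X k_gt_1 by auto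
  have below: "2 * card (?N {} X) + 1 = 3 ^ k"
    using card_max_positive_between[of "{}" X] X_sub card_X by simp
  have above: "2 * card (?N X Bplus) = 2 ^ k * 3 ^ (n - k)"
    using card_max_positive_between[of X Bplus] X_sub X_ne card_X card_Bplus by simp
  let ?U = "?N {} X \<union> ?N X Bplus"
  have fin: "finite (?N Must May)" for Must May
    by (rule finite_subset[OF _ finite_signed_sets]) auto
  have exact: "2 * card (?N X X) = 2 ^ k"
    using card_max_positive_between[of X X] X_sub X_ne card_X by simp
  have "?N {} X \<inter> ?N X Bplus = ?N X X"
    using abs_signed_set_subset X_sub by blast
  then have union: "card (?N {} X) + card (?N X Bplus) = card ?U + card (?N X X)"
    using card_Un_Int[OF fin[of "{}" X] fin[of X Bplus]] by simp
  have "X \<in> ?U"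
    using V1_subset_phiB X P_pos X_sub unfolding phiB_eq by force
  then have "card {Y\<in>V2 n k x. (X, Y) \<in> E} = card ?U - 1" "1 \<le> card ?U"
    unfolding neighbours_of_V1_eq[OF X] using fin[of "{}" X] fin[of X Bplus]
    by (simp_all add: card_Diff_singleton Suc_le_eq card_gt_0_iff) blast
  then show ?thesis
    using below above exact union by linarith
qed

lemma card_neighbours_of_V1_int:
  assumes "X \<in> V1 n k x"
  shows "int (card {Y\<in>V2 n k x. (X, Y) \<in> E}) = (3 ^ k - 3) div 2 + 2 ^ (k - 1) * (3 ^ (n - k) - 1)"
proof -
  define d where "d = int (card {Y\<in>V2 n k x. (X, Y) \<in> E})"
  define t :: int where "t = 2 ^ (k - 1)"
  define c :: int where "c = 3 ^ (n - k)"
  have "(2::int) ^ k = 2 ^ Suc (k - 1)" using k_gt_1 by simp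
  then have two_k: "(2::int) ^ k = 2 * t" unfolding t_def by simp
  have "2 * d + 3 + 2 ^ k = 3 ^ k + 2 ^ k * c"
    unfolding d_def c_def using arg_cong[OF card_neighbours_of_V1[OF assms], of int] by simp
  then have "2 * d = (3 ^ k - 3) + 2 * (t * (c - 1))"
    unfolding two_k by (simp add: algebra_simps)
  moreover have "(3::int) ^ k - 3 = 2 * ((3 ^ k - 3) div 2)" by simp
  ultimately show ?thesis unfolding d_def t_def c_def by linarith
qed

lemma pairs_at_dist_eq_card:
  "pairs_at_dist n k x W h = card {{u, v} | u v. u \<in> W \<and> v \<in> W \<and> u \<noteq> v \<and> rel_dist E u v h}"
  unfolding pairs_at_dist_def HB_dist_eq_eq_rel_dist ..

lemma finite_V1: "finite (V1 n k x)"
  using finite_subset[OF V1_subset_phiB] finite_signed_sets unfolding phiB_eq by simp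

lemma finite_V2: "finite (V2 n k x)"
  using finite_signed_sets unfolding V2_def phiB_eq by simp

lemma pairs_at_odd_dist:
  assumes "odd h"
  shows "pairs_at_dist n k x (HB_verts n k x) h = (\<Sum>X\<in>V1 n k x. card {Y\<in>V2 n k x. rel_dist E X Y h})"
  unfolding pairs_at_dist_eq_card HB_verts_def
proof (rule card_doubletons_across[OF finite_V1 finite_V2 disjoint_parts])
  show "symp (\<lambda>u v. rel_dist E u v h)"
    using rel_dist_sym[OF sym_E] by (blast intro: sympI)
  show "u \<in> V1 n k x \<longleftrightarrow> v \<in> V2 n k x"
    if "u \<in> V1 n k x \<union> V2 n k x" "v \<in> V1 n k x \<union> V2 n k x" "rel_dist E u v h" for u v
    using relpow_parity[of u v h] that assms disjoint_parts unfolding rel_dist_def by auto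
qed

lemma pairs_at_dist_1:
  "int (pairs_at_dist n k x (HB_verts n k x) 1)
     = int (n choose k) * ((3 ^ k - 3) div 2 + 2 ^ (k - 1) * (3 ^ (n - k) - 1))"
proof -
  have "int (pairs_at_dist n k x (HB_verts n k x) 1)
          = (\<Sum>X\<in>V1 n k x. int (card {Y\<in>V2 n k x. (X, Y) \<in> E}))"
    using pairs_at_odd_dist[of 1] unfolding rel_dist_1_iff by simp
  also have "\<dots> = (\<Sum>X\<in>V1 n k x. (3 ^ k - 3) div 2 + 2 ^ (k - 1) * (3 ^ (n - k) - 1))"
    by (rule sum.cong) (simp_all add: card_neighbours_of_V1_int)
  finally show ?thesis using card_V1 by simp
qed

lemma pairs_at_dist_3:
  "int (pairs_at_dist n k x (HB_verts n k x) 3)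
     = int (n choose k) * ((3 ^ n - 1) div 2 - int (n choose k) - (3 ^ k - 3) div 2
                           - 2 ^ (k - 1) * (3 ^ (n - k) - 1))"
proof -
  have "int (card {Y\<in>V2 n k x. rel_dist E X Y 3})
          = (3 ^ n - 1) div 2 - int (n choose k) - ((3 ^ k - 3) div 2 + 2 ^ (k - 1) * (3 ^ (n - k) - 1))"
    if X: "X \<in> V1 n k x" for X
  proof -
    have "{Y\<in>V2 n k x. rel_dist E X Y 3} = V2 n k x - {Y\<in>V2 n k x. (X, Y) \<in> E}"
      using rel_dist_3_iff[OF X] by blast
    then have "card {Y\<in>V2 n k x. rel_dist E X Y 3} = card (V2 n k x) - card {Y\<in>V2 n k x. (X, Y) \<in> E}"
      using finite_V2 by (simp add: card_Diff_subset)
    moreover have "card {Y\<in>V2 n k x. (X, Y) \<in> E} \<le> card (V2 n k x)"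
      using finite_V2 by (intro card_mono) auto
    ultimately show ?thesis
      using int_card_V2 card_neighbours_of_V1_int[OF X] by simp
  qed
  then have "int (pairs_at_dist n k x (HB_verts n k x) 3)
          = (\<Sum>X\<in>V1 n k x. (3 ^ n - 1) div 2 - int (n choose k)
                             - ((3 ^ k - 3) div 2 + 2 ^ (k - 1) * (3 ^ (n - k) - 1)))"
    using pairs_at_odd_dist[of 3] by simp
  then show ?thesis using card_V1 by (simp add: algebra_simps)
qed

lemma pairs_at_dist_V1: "pairs_at_dist n k x (V1 n k x) 2 = (n choose k) choose 2"
  unfolding pairs_at_dist_eq_card card_V1[symmetric]
  by (rule card_doubletons_all[OF finite_V1 rel_dist_within_A])

lemma pairs_at_dist_V2:
  "int (pairs_at_dist n k x (V2 n k x) 2) + int (pairs_at_dist n k x (V2 n k x) 4)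
     = int (((3 ^ n - 1) div 2 - (n choose k)) choose 2)"
proof -
  have "pairs_at_dist n k x (V2 n k x) 2 + pairs_at_dist n k x (V2 n k x) 4 = card (V2 n k x) choose 2"
    unfolding pairs_at_dist_eq_card
  proof (rule card_doubletons_split[OF finite_V2])
    show "symp (\<lambda>u v. rel_dist E u v 4)"
      using rel_dist_sym[OF sym_E] by (blast intro: sympI)
  qed (auto dest: rel_dist_unique rel_dist_within_B)
  moreover have "card (V2 n k x) = (3 ^ n - 1) div 2 - (n choose k)"
    using card_V2 by simp
  ultimately show ?thesis by simp
qed

end

theorem mainTheorem15:
  fixes n k :: nat and x :: "nat \<Rightarrow> real"
  assumes "n > 2" and "1 < k" and "k < n"
    and "\<forall>i. 1 \<le> i \<and> i \<le> n \<longrightarrow> 0 < x i"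
    and "\<forall>i j. 1 \<le> i \<and> i < j \<and> j \<le> n \<longrightarrow> x i < x j"
  shows "int (pairs_at_dist n k x (HB_verts n k x) 1) =
           int (n choose k) * ((3 ^ k - 3) div 2 + 2 ^ (k - 1) * (3 ^ (n - k) - 1)) \<and>
         int (pairs_at_dist n k x (HB_verts n k x) 3) =
           int (n choose k) * ((3 ^ n - 1) div 2 - int (n choose k) - (3 ^ k - 3) div 2
                               - 2 ^ (k - 1) * (3 ^ (n - k) - 1)) \<and>
         pairs_at_dist n k x (V1 n k x) 2 = (n choose k) choose 2 \<and>
         int (pairs_at_dist n k x (V2 n k x) 2) + int (pairs_at_dist n k x (V2 n k x) 4) =
           int ((((3 ^ n - 1) div 2) - (n choose k)) choose 2)"
proof -
  interpret HB_parameters n k x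
    using assms by unfold_locales
  show ?thesis
    using pairs_at_dist_1 pairs_at_dist_3 pairs_at_dist_V1 pairs_at_dist_V2 by simp
qed

end
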